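(* Let $\mathcal{J}$ be a finite set of content points and fix a provider $k$ with skill beliefs $\widetilde{S}_k=(\widetilde{s}_{k,j})_{j\in\mathcal{J}}$, $\widetilde{s}_{k,j}\in(0,1]$, and audience beliefs $\widetilde{A}_k=(\widetilde{a}_{k,j})_{j\in\mathcal{J}}$, $\widetilde{a}_{k,j}\ge 0$. For $j\in\mathcal{J}$ and trust $\lambda\in(0,1]$ define $$\phi(j;\lambda,\widetilde{S}_k,\widetilde{A}_k)=\max\left\{\frac{1}{\lambda}\left(\frac{\widetilde{s}_{k,\ell}\,\widetilde{a}_{k,\ell}}{\widetilde{s}_{k,j}}-(1-\lambda)\widetilde{a}_{k,j}\right):\ \ell\in\mathcal{J},\ \widetilde{s}_{k,\ell}\widetilde{a}_{k,\ell}>\widetilde{s}_{k,j}\widetilde{a}_{k,j}\right\}.$$ Then for every $j\in\mathcal{J}$ and all trust values $\lambda\ge\lambda'$ in $(0,1]$, $\phi(j;\lambda,\widetilde{S}_k,\widetilde{A}_k)\le\phi(j;\lambda',\widetilde{S}_k,\widetilde{A}_k)$.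
   Context: Interpretation: $\phi(j;\lambda,\widetilde{S}_k,\widetilde{A}_k)$ is the minimum promised audience a recommender system must commit to provider $k$ so that, when $k$ updates its audience belief at $j$ to $(1-\lambda)\widetilde{a}_{k,j}+\lambda C$ upon receiving a promise $C$ and chooses the point maximizing $\widetilde{s}_{k,\cdot}\widetilde{a}_{k,\cdot}$, point $j$ becomes $k$'s best response. *)

theory Defs
  imports Main "HOL.Real"
begin

definition better_points :: "'j set \<Rightarrow> ('j \<Rightarrow> real) \<Rightarrow> ('j \<Rightarrow> real) \<Rightarrow> 'j \<Rightarrow> 'j set" where
  "better_points J s a j = {l \<in> J. s l * a l > s j * a j}"

text \<open>When no point is strictly
  better than j the maximum is over the empty set; we fix the convention 0
  (j is then already a best response; the convention is the same for every lambda).\<close>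
definition phi :: "'j set \<Rightarrow> 'j \<Rightarrow> real \<Rightarrow> ('j \<Rightarrow> real) \<Rightarrow> ('j \<Rightarrow> real) \<Rightarrow> real" where
  "phi J j lam s a =
     (if better_points J s a j = {} then 0
      else Max ((\<lambda>l. (1 / lam) * (s l * a l / s j - (1 - lam) * a j)) ` better_points J s a j))"

end

theory Submission
  imports Defs
begin

text \<open>Each term of the maximum defining phi can be written as (c - y) / lam + y with
  c = s l * a l / s j and y = a j. For a point l strictly better than j we have c > y, so
  every term decreases in the trust lam, and hence so does their maximum over the
  (lam-independent) set of better points.\<close>

lemma Max_image_le_Max_image:
  fixes f g :: "'a \<Rightarrow> 'b :: linorder"
  assumes "finite B" "B \<noteq> {}" "\<And>x. x \<in> B \<Longrightarrow> f x \<le> g x"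
  shows "Max (f ` B) \<le> Max (g ` B)"
proof (rule Max.boundedI)
  fix y assume "y \<in> f ` B"
  then obtain x where "x \<in> B" "y = f x" by blast
  then show "y \<le> Max (g ` B)"
    using assms by (metis Max_ge finite_imageI image_eqI order_trans)
qed (use assms in auto)

lemma promise_term_antimono_trust:
  fixes c y lam lam' :: real
  assumes "y < c" "0 < lam'" "lam' \<le> lam"
  shows "(1 / lam) * (c - (1 - lam) * y) \<le> (1 / lam') * (c - (1 - lam') * y)"
proof -
  have "(1 / lam) * (c - (1 - lam) * y) = (c - y) / lam + y"
    and "(1 / lam') * (c - (1 - lam') * y) = (c - y) / lam' + y"
    using assms by (simp_all add: field_simps)
  moreover have "(c - y) / lam \<le> (c - y) / lam'"
    using assms by (intro divide_left_mono) auto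
  ultimately show ?thesis by simp
qed

lemma phi_antimono_trust:
  assumes "finite J" "0 < s j" "0 < lam'" "lam' \<le> lam"
  shows "phi J j lam s a \<le> phi J j lam' s a"
proof (cases "better_points J s a j = {}")
  case True
  then show ?thesis by (simp add: phi_def)
next
  case False
  have "finite (better_points J s a j)"
    using assms(1) by (simp add: better_points_def)
  moreover have "a j < s l * a l / s j" if "l \<in> better_points J s a j" for l
    using that assms(2) by (simp add: better_points_def field_simps)
  ultimately show ?thesis
    using False assms(3,4)
    by (simp only: phi_def if_False) (intro Max_image_le_Max_image promise_term_antimono_trust)
qed

theorem lemma1:
  fixes J :: "'j set" and s a :: "'j \<Rightarrow> real" and j :: 'j and lam lam' :: real
  assumes "finite J"
    and "\<And>l. l \<in> J \<Longrightarrow> 0 < s l \<and> s l \<le> 1"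
    and "\<And>l. l \<in> J \<Longrightarrow> 0 \<le> a l"
    and "j \<in> J"
    and "0 < lam'" and "lam' \<le> lam" and "lam \<le> 1"
  shows "phi J j lam s a \<le> phi J j lam' s a"
  using assms(1,4,5,6) assms(2)[OF assms(4)] by (intro phi_antimono_trust) auto

end
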